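(* In the absence of the UAV speed constraint (i.e. allowing arbitrary measurable trajectories $x:[0,T]\to\mathbb{R}$), for any $T>0$ the capacity region of the UAV-enabled two-user broadcast channel is $$\hat{\mathcal{C}}(\bar P)=\left\{(r_1,r_2): r_1+r_2\le\log_2\left(1+\frac{\bar P\beta_0}{H^2}\right),\ r_1\ge0,\ r_2\ge0\right\}.$$
   Context: Fix $D>0$, $H>0$, $\beta_0>0$, $\bar P>0$. Ground users GU 1, GU 2 are at horizontal positions $x_1=-D/2$, $x_2=D/2$; for UAV position $x\in\mathbb{R}$ (constant altitude $H$), $h_k(x)=\beta_0/((x-x_k)^2+H^2)$. A power allocation is a pair of measurable functions $p_1,p_2:[0,T]\to[0,\infty)$ with $p_1(t)+p_2(t)\le\bar P$. $\mathcal{C}(x,p)$ is the set of $(r_1,r_2)$, $r_1,r_2\ge0$, with $r_1\le\frac1T\int_0^T\log_2(1+p_1(t)h_1(x(t)))dt$, $r_2\le\frac1T\int_0^T\log_2(1+p_2(t)h_2(x(t)))dt$, $r_1+r_2\le\frac1T\int_0^T\log_2(1+p_1(t)h_1(x(t))+p_2(t)h_2(x(t)))dt$. The capacity region here is the union of $\mathcal{C}(x,p)$ over all such $x$ and $p$. *)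

theory Defs
  imports "HOL-Analysis.Analysis"
begin

text \<open>Channel power gain from a UAV at horizontal position x (altitude H)
  to a ground user at horizontal position xk.\<close>
definition chan_gain :: "real \<Rightarrow> real \<Rightarrow> real \<Rightarrow> real \<Rightarrow> real" where
  "chan_gain \<beta>0 H xk x = \<beta>0 / ((x - xk)^2 + H^2)"

definition avg_rate :: "real \<Rightarrow> (real \<Rightarrow> real) \<Rightarrow> real" where
  "avg_rate T g = (1 / T) * (LINT t:{0..T}|lborel. g t)"

definition admissible :: "real \<Rightarrow> real \<Rightarrow> (real \<Rightarrow> real) \<Rightarrow> (real \<Rightarrow> real) \<Rightarrow> (real \<Rightarrow> real) \<Rightarrow> bool" where
  "admissible Pbar T x p1 p2 \<longleftrightarrow>
     set_borel_measurable lborel {0..T} x \<and>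
     set_borel_measurable lborel {0..T} p1 \<and>
     set_borel_measurable lborel {0..T} p2 \<and>
     (\<forall>t\<in>{0..T}. p1 t \<ge> 0 \<and> p2 t \<ge> 0 \<and> p1 t + p2 t \<le> Pbar)"

definition rate_region :: "real \<Rightarrow> real \<Rightarrow> real \<Rightarrow> real \<Rightarrow> (real \<Rightarrow> real) \<Rightarrow> (real \<Rightarrow> real) \<Rightarrow> (real \<Rightarrow> real) \<Rightarrow> (real \<times> real) set" where
  "rate_region D H \<beta>0 T x p1 p2 =
     {(r1, r2). r1 \<ge> 0 \<and> r2 \<ge> 0 \<and>
        r1 \<le> avg_rate T (\<lambda>t. log 2 (1 + p1 t * chan_gain \<beta>0 H (- D / 2) (x t))) \<and>
        r2 \<le> avg_rate T (\<lambda>t. log 2 (1 + p2 t * chan_gain \<beta>0 H (D / 2) (x t))) \<and>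
        r1 + r2 \<le> avg_rate T (\<lambda>t. log 2 (1 + p1 t * chan_gain \<beta>0 H (- D / 2) (x t)
                                             + p2 t * chan_gain \<beta>0 H (D / 2) (x t)))}"

definition capacity_region :: "real \<Rightarrow> real \<Rightarrow> real \<Rightarrow> real \<Rightarrow> real \<Rightarrow> (real \<times> real) set" where
  "capacity_region D H \<beta>0 Pbar T =
     (\<Union>{rate_region D H \<beta>0 T x p1 p2 | x p1 p2. admissible Pbar T x p1 p2})"

end

theory Submission imports Defs begin

text \<open>Since every channel gain is at most \<open>\<beta>0 / H\<^sup>2\<close>, attained by hovering directly above
  a user, the instantaneous sum rate never exceeds \<open>L = log 2 (1 + Pbar \<beta>0 / H\<^sup>2)\<close>, and
  neither does its time average. Conversely, the UAV hovers above GU 1 serving it alone at full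
  power for a fraction \<open>r1 / L\<close> of the time and then jumps above GU 2 serving it alone; without
  a speed constraint the jump costs nothing, so \<open>(r1, L - r1)\<close> and hence every point under it
  is achievable.\<close>

lemma set_lborel_integral_step:
  fixes a b s T :: real
  assumes "0 \<le> s" "s \<le> T"
  shows "(LINT t:{0..T}|lborel. (if t < s then a else b)) = a * s + b * (T - s)"
proof -
  have split: "indicator {0..T} t *\<^sub>R (if t < s then a else b)
      = a * indicator {0..<s} t + b * indicator {s..T} t" for t :: real
    using assms by (auto simp: indicator_def)
  have int_a: "integrable lborel (\<lambda>t. a * indicator {0..<s} t :: real)"
    by (intro integrable_mult_right integrable_real_indicator) (use assms in auto)
  have int_b: "integrable lborel (\<lambda>t. b * indicator {s..T} t :: real)"
    by (intro integrable_mult_right integrable_real_indicator) (use assms in auto)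
  have "(LINT t:{0..T}|lborel. (if t < s then a else b))
      = a * measure lborel {0..<s} + b * measure lborel {s..T}"
    unfolding set_lebesgue_integral_def split
    by (simp add: Bochner_Integration.integral_add[OF int_a int_b])
  also have "\<dots> = a * s + b * (T - s)" using assms by simp
  finally show ?thesis .
qed

lemma avg_rate_step:
  assumes "0 \<le> s" "s \<le> T"
  shows "avg_rate T (\<lambda>t. if t < s then a else b) = (a * s + b * (T - s)) / T"
  unfolding avg_rate_def set_lborel_integral_step[OF assms] by simp

text \<open>No integrability hypothesis is needed: a non-integrable function has integral \<open>0\<close>.\<close>
lemma set_lborel_integral_le_const:
  fixes g :: "real \<Rightarrow> real" and C T :: real
  assumes "0 \<le> C" "0 \<le> T" "\<And>t. t \<in> {0..T} \<Longrightarrow> g t \<le> C"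
  shows "(LINT t:{0..T}|lborel. g t) \<le> C * T"
proof (cases "set_integrable lborel {0..T} g")
  case True
  have "set_integrable lborel {0..T} (\<lambda>t. C)"
    using assms by (simp add: set_integrable_def integrable_real_mult_indicator)
  then have "(LINT t:{0..T}|lborel. g t) \<le> (LINT t:{0..T}|lborel. C)"
    by (intro set_integral_mono[OF True]) (use assms in auto)
  also have "\<dots> = C * T"
    using set_lborel_integral_step[of 0 T C C] assms by simp
  finally show ?thesis .
next
  case False
  then have "(LINT t:{0..T}|lborel. g t) = 0"
    by (simp add: set_lebesgue_integral_def set_integrable_def not_integrable_integral_eq)
  then show ?thesis using assms by simp
qed

lemma avg_rate_le_const:
  assumes "0 \<le> C" "0 < T" "\<And>t. t \<in> {0..T} \<Longrightarrow> g t \<le> C"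
  shows "avg_rate T g \<le> C"
proof -
  have "avg_rate T g \<le> (1 / T) * (C * T)"
    unfolding avg_rate_def
    using assms by (intro mult_left_mono set_lborel_integral_le_const) auto
  then show ?thesis using assms by simp
qed

lemma chan_gain_nonneg: "0 \<le> \<beta>0 \<Longrightarrow> 0 \<le> chan_gain \<beta>0 H xk x"
  unfolding chan_gain_def by simp

lemma chan_gain_le:
  assumes "H \<noteq> 0" "0 \<le> \<beta>0"
  shows "chan_gain \<beta>0 H xk x \<le> \<beta>0 / H^2"
proof -
  have "0 < (x - xk)^2 + H^2" using assms by (intro add_nonneg_pos) auto
  then show ?thesis
    unfolding chan_gain_def using assms by (intro divide_left_mono) auto
qed

lemma chan_gain_self: "chan_gain \<beta>0 H xk xk = \<beta>0 / H^2"
  unfolding chan_gain_def by simp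

lemma weighted_gains_le:
  fixes p1 p2 h1 h2 P g :: real
  assumes "0 \<le> p1" "0 \<le> p2" "p1 + p2 \<le> P" "h1 \<le> g" "h2 \<le> g" "0 \<le> g"
  shows "p1 * h1 + p2 * h2 \<le> P * g"
proof -
  have "p1 * h1 + p2 * h2 \<le> p1 * g + p2 * g"
    using assms by (intro add_mono mult_left_mono) auto
  also have "\<dots> \<le> P * g"
    using assms by (simp add: mult_right_mono flip: distrib_right)
  finally show ?thesis .
qed

lemma capacity_region_subset_sum_rate_bound:
  fixes D H \<beta>0 Pbar T :: real
  assumes "H > 0" "\<beta>0 > 0" "Pbar > 0" "T > 0"
  shows "capacity_region D H \<beta>0 Pbar T \<subseteq>
           {(r1, r2). r1 + r2 \<le> log 2 (1 + Pbar * \<beta>0 / H^2) \<and> r1 \<ge> 0 \<and> r2 \<ge> 0}"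
proof clarify
  fix r1 r2
  assume "(r1, r2) \<in> capacity_region D H \<beta>0 Pbar T"
  then obtain x p1 p2 where adm: "admissible Pbar T x p1 p2"
    and rates: "(r1, r2) \<in> rate_region D H \<beta>0 T x p1 p2"
    unfolding capacity_region_def by blast
  have "0 < Pbar * \<beta>0 / H^2" using assms by simp
  then have "0 \<le> log 2 (1 + Pbar * \<beta>0 / H^2)" by simp
  let ?h1 = "\<lambda>t. chan_gain \<beta>0 H (- D / 2) (x t)"
  let ?h2 = "\<lambda>t. chan_gain \<beta>0 H (D / 2) (x t)"
  have pointwise: "log 2 (1 + p1 t * ?h1 t + p2 t * ?h2 t) \<le> log 2 (1 + Pbar * \<beta>0 / H^2)"
    if "t \<in> {0..T}" for t
  proof -
    have p: "0 \<le> p1 t" "0 \<le> p2 t" "p1 t + p2 t \<le> Pbar"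
      using adm that unfolding admissible_def by auto
    have "p1 t * ?h1 t + p2 t * ?h2 t \<le> Pbar * (\<beta>0 / H^2)"
      using p assms by (intro weighted_gains_le chan_gain_le) auto
    moreover have "0 \<le> p1 t * ?h1 t + p2 t * ?h2 t"
      using p assms by (simp add: chan_gain_nonneg)
    ultimately show ?thesis by simp
  qed
  have "r1 + r2 \<le> avg_rate T (\<lambda>t. log 2 (1 + p1 t * ?h1 t + p2 t * ?h2 t))"
    using rates unfolding rate_region_def by auto
  also have "\<dots> \<le> log 2 (1 + Pbar * \<beta>0 / H^2)"
    using assms pointwise \<open>0 \<le> log 2 (1 + Pbar * \<beta>0 / H^2)\<close>
    by (intro avg_rate_le_const) auto
  finally show "r1 + r2 \<le> log 2 (1 + Pbar * \<beta>0 / H^2) \<and> r1 \<ge> 0 \<and> r2 \<ge> 0"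
    using rates unfolding rate_region_def by auto
qed

lemma sum_rate_bound_subset_capacity_region:
  fixes D H \<beta>0 Pbar T :: real
  assumes "H > 0" "\<beta>0 > 0" "Pbar > 0" "T > 0"
  shows "{(r1, r2). r1 + r2 \<le> log 2 (1 + Pbar * \<beta>0 / H^2) \<and> r1 \<ge> 0 \<and> r2 \<ge> 0}
           \<subseteq> capacity_region D H \<beta>0 Pbar T"
proof clarify
  fix r1 r2 :: real
  define L where "L = log 2 (1 + Pbar * \<beta>0 / H^2)"
  assume "r1 + r2 \<le> log 2 (1 + Pbar * \<beta>0 / H^2)" "r1 \<ge> 0" "r2 \<ge> 0"
  then have r: "r1 + r2 \<le> L" "r1 \<ge> 0" "r2 \<ge> 0" unfolding L_def by auto
  have "0 < Pbar * \<beta>0 / H^2" using assms by simp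
  then have "L > 0" unfolding L_def by simp
  define s where "s = T * r1 / L"
  have s: "0 \<le> s" "s \<le> T"
    unfolding s_def using r assms \<open>L > 0\<close> by (auto simp: divide_le_eq)
  define x where "x t = (if t < s then - D / 2 else D / 2)" for t
  define p1 where "p1 t = (if t < s then Pbar else 0)" for t
  define p2 where "p2 t = (if t < s then 0 else Pbar)" for t
  have "admissible Pbar T x p1 p2"
    unfolding admissible_def x_def p1_def p2_def set_borel_measurable_def
    using assms by (auto intro!: borel_measurable_times measurable_If borel_measurable_indicator)
  moreover
  have "(\<lambda>t. log 2 (1 + p1 t * chan_gain \<beta>0 H (- D / 2) (x t))) = (\<lambda>t. if t < s then L else 0)"
       "(\<lambda>t. log 2 (1 + p2 t * chan_gain \<beta>0 H (D / 2) (x t))) = (\<lambda>t. if t < s then 0 else L)"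
       "(\<lambda>t. log 2 (1 + p1 t * chan_gain \<beta>0 H (- D / 2) (x t)
                    + p2 t * chan_gain \<beta>0 H (D / 2) (x t))) = (\<lambda>t. if t < s then L else L)"
    by (auto simp: p1_def p2_def x_def chan_gain_self L_def)
  moreover have "avg_rate T (\<lambda>t. if t < s then L else 0) = r1"
    unfolding avg_rate_step[OF s] using assms \<open>L > 0\<close> by (simp add: s_def)
  moreover have "avg_rate T (\<lambda>t. if t < s then 0 else L) = L - r1"
    unfolding avg_rate_step[OF s] using assms \<open>L > 0\<close> by (simp add: s_def field_simps)
  moreover have "avg_rate T (\<lambda>t. if t < s then L else L) = L"
    unfolding avg_rate_step[OF s] using assms by (simp add: field_simps)
  ultimately have "(r1, r2) \<in> rate_region D H \<beta>0 T x p1 p2"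
    unfolding rate_region_def using r by simp
  with \<open>admissible Pbar T x p1 p2\<close> show "(r1, r2) \<in> capacity_region D H \<beta>0 Pbar T"
    unfolding capacity_region_def by blast
qed

theorem proposition1:
  fixes D H \<beta>0 Pbar T :: real
  assumes "D > 0" and "H > 0" and "\<beta>0 > 0" and "Pbar > 0" and "T > 0"
  shows "capacity_region D H \<beta>0 Pbar T =
           {(r1, r2). r1 + r2 \<le> log 2 (1 + Pbar * \<beta>0 / H^2) \<and> r1 \<ge> 0 \<and> r2 \<ge> 0}"
  using capacity_region_subset_sum_rate_bound sum_rate_bound_subset_capacity_region assms
  by (intro subset_antisym) auto

end
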